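(* Let $(S,\curlyvee)$ be a $\curlyvee$-algebra. A non-empty subset $I\subseteq S$ is a $\lesssim$-ideal if and only if it is a down-set under $\lesssim$ such that $i\curlyvee j\in I$ whenever $i,j\in I$.
   Context: A $\curlyvee$-algebra is an algebra $(S,\curlyvee)$ with one binary operation such that, defining $a\sqcup b=a\curlyvee(a\curlyvee b)$ and $a\lesssim b$ iff $b\sqcup a=b$: $\sqcup$ is associative, $a\sqcup a=a$ and $a\sqcup b=(a\sqcup b)\sqcup a$; $\curlyvee$ is commutative and idempotent; $(a\curlyvee b)\sqcup(a\sqcup b)=a\sqcup b$; $a\sqcup(b\curlyvee c)=(a\sqcup b)\curlyvee(a\sqcup c)$; and if $d\lesssim a,b,c,a\curlyvee b,b\curlyvee c$ then $d\lesssim a\curlyvee c$. A $\lesssim$-ideal of $S$ is a non-empty subset $I$ that is a down-set under $\lesssim$ and satisfies $i\sqcup j\in I$ for all $i,j\in I$. *)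

theory Defs
  imports Main
begin

definition sqcup :: "('a \<Rightarrow> 'a \<Rightarrow> 'a) \<Rightarrow> 'a \<Rightarrow> 'a \<Rightarrow> 'a" where
  "sqcup v a b = v a (v a b)"

definition lesssim :: "('a \<Rightarrow> 'a \<Rightarrow> 'a) \<Rightarrow> 'a \<Rightarrow> 'a \<Rightarrow> bool" where
  "lesssim v a b \<longleftrightarrow> sqcup v b a = b"

definition vee_algebra :: "'a set \<Rightarrow> ('a \<Rightarrow> 'a \<Rightarrow> 'a) \<Rightarrow> bool" where
  "vee_algebra S v \<longleftrightarrow>
     (\<forall>a\<in>S. \<forall>b\<in>S. v a b \<in> S) \<and>
     (\<forall>a\<in>S. \<forall>b\<in>S. \<forall>c\<in>S. sqcup v (sqcup v a b) c = sqcup v a (sqcup v b c)) \<and>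
     (\<forall>a\<in>S. sqcup v a a = a) \<and>
     (\<forall>a\<in>S. \<forall>b\<in>S. sqcup v a b = sqcup v (sqcup v a b) a) \<and>
     (\<forall>a\<in>S. \<forall>b\<in>S. v a b = v b a) \<and>
     (\<forall>a\<in>S. v a a = a) \<and>
     (\<forall>a\<in>S. \<forall>b\<in>S. sqcup v (v a b) (sqcup v a b) = sqcup v a b) \<and>
     (\<forall>a\<in>S. \<forall>b\<in>S. \<forall>c\<in>S. sqcup v a (v b c) = v (sqcup v a b) (sqcup v a c)) \<and>
     (\<forall>a\<in>S. \<forall>b\<in>S. \<forall>c\<in>S. \<forall>d\<in>S.
        lesssim v d a \<and> lesssim v d b \<and> lesssim v d c \<and> lesssim v d (v a b) \<and> lesssim v d (v b c)
        \<longrightarrow> lesssim v d (v a c))"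

definition down_set :: "'a set \<Rightarrow> ('a \<Rightarrow> 'a \<Rightarrow> 'a) \<Rightarrow> 'a set \<Rightarrow> bool" where
  "down_set S v I \<longleftrightarrow> I \<subseteq> S \<and> (\<forall>x\<in>S. \<forall>i\<in>I. lesssim v x i \<longrightarrow> x \<in> I)"

definition lesssim_ideal :: "'a set \<Rightarrow> ('a \<Rightarrow> 'a \<Rightarrow> 'a) \<Rightarrow> 'a set \<Rightarrow> bool" where
  "lesssim_ideal S v I \<longleftrightarrow> I \<noteq> {} \<and> down_set S v I \<and> (\<forall>i\<in>I. \<forall>j\<in>I. sqcup v i j \<in> I)"

end

theory Submission
  imports Defs
begin

text \<open>Since \<open>a \<squnion> b = a \<curlyvee> (a \<curlyvee> b)\<close>, closure under \<open>\<curlyvee>\<close> gives closure under \<open>\<squnion>\<close>.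
  Conversely \<open>a \<squnion> b\<close> lies above \<open>a\<close> and \<open>b\<close>, and distributivity of \<open>\<squnion>\<close> over \<open>\<curlyvee>\<close> then
  puts \<open>a \<curlyvee> b\<close> below it, so a down-set closed under \<open>\<squnion>\<close> is closed under \<open>\<curlyvee>\<close>.\<close>

lemma vee_algebra_vee_closed:
  assumes "vee_algebra S v" "a \<in> S" "b \<in> S"
  shows "v a b \<in> S"
  using assms unfolding vee_algebra_def by blast

lemma vee_algebra_sqcup_closed:
  assumes "vee_algebra S v" "a \<in> S" "b \<in> S"
  shows "sqcup v a b \<in> S"
  using assms by (simp add: sqcup_def vee_algebra_vee_closed)

lemma lesssim_sqcup_left:
  assumes "vee_algebra S v" "a \<in> S" "b \<in> S"
  shows "lesssim v a (sqcup v a b)"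
  using assms unfolding lesssim_def vee_algebra_def by metis

lemma lesssim_sqcup_right:
  assumes "vee_algebra S v" "a \<in> S" "b \<in> S"
  shows "lesssim v b (sqcup v a b)"
proof -
  have "sqcup v (sqcup v a b) b = sqcup v a (sqcup v b b)"
    using assms unfolding vee_algebra_def by blast
  also have "\<dots> = sqcup v a b"
    using assms unfolding vee_algebra_def by simp
  finally show ?thesis unfolding lesssim_def .
qed

lemma lesssim_vee_sqcup:
  assumes S: "vee_algebra S v" and a: "a \<in> S" and b: "b \<in> S"
  shows "lesssim v (v a b) (sqcup v a b)"
proof -
  let ?s = "sqcup v a b"
  have "?s \<in> S" using vee_algebra_sqcup_closed[OF S a b] .
  then have "sqcup v ?s (v a b) = v (sqcup v ?s a) (sqcup v ?s b)"
    using S a b unfolding vee_algebra_def by blast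
  also have "\<dots> = v ?s ?s"
    using lesssim_sqcup_left[OF S a b] lesssim_sqcup_right[OF S a b]
    unfolding lesssim_def by simp
  also have "\<dots> = ?s"
    using S \<open>?s \<in> S\<close> unfolding vee_algebra_def by blast
  finally show ?thesis unfolding lesssim_def .
qed

lemma down_set_sqcup_closed_imp_vee_closed:
  assumes S: "vee_algebra S v" and down: "down_set S v I"
    and sqcup_closed: "\<forall>i\<in>I. \<forall>j\<in>I. sqcup v i j \<in> I"
    and i: "i \<in> I" and j: "j \<in> I"
  shows "v i j \<in> I"
proof -
  have iS: "i \<in> S" and jS: "j \<in> S" using down i j unfolding down_set_def by auto
  have "lesssim v (v i j) (sqcup v i j)" by (rule lesssim_vee_sqcup[OF S iS jS])
  moreover have "sqcup v i j \<in> I" using sqcup_closed i j by blast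
  ultimately show ?thesis
    using down vee_algebra_vee_closed[OF S iS jS] unfolding down_set_def by blast
qed

theorem proposition4p5:
  assumes "vee_algebra S v"
    and "I \<subseteq> S" and "I \<noteq> {}"
  shows "lesssim_ideal S v I \<longleftrightarrow> (down_set S v I \<and> (\<forall>i\<in>I. \<forall>j\<in>I. v i j \<in> I))"
proof
  assume "lesssim_ideal S v I"
  then show "down_set S v I \<and> (\<forall>i\<in>I. \<forall>j\<in>I. v i j \<in> I)"
    using down_set_sqcup_closed_imp_vee_closed[OF assms(1)]
    unfolding lesssim_ideal_def by blast
next
  assume "down_set S v I \<and> (\<forall>i\<in>I. \<forall>j\<in>I. v i j \<in> I)"
  then show "lesssim_ideal S v I"
    using assms(3) unfolding lesssim_ideal_def sqcup_def by blast
qed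

end
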